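(* Let $\Gamma$ be the graph with vertex set $\{v_{n,k}: n\in\mathbb Z,\ k\in\mathbb Z/10\mathbb Z\}$ and edge set $\{v_{n,k}v_{n,k+1}\}\cup\{v_{n,2k+1}v_{n+1,4k+2}\}$ ($n\in\mathbb Z$, $k\in\mathbb Z/10\mathbb Z$), and for $n\in\mathbb Z$ let $L_n=\{v_{n,k}: k\in\mathbb Z/10\mathbb Z\}$. Then every automorphism $\phi$ of $\Gamma$ preserves the partition $\{L_n: n\in\mathbb Z\}$, i.e. for every $n$ there is $m$ with $\phi(L_n)=L_m$.
   Context: Indices $k$ are taken modulo 10. *)

theory Defs
  imports Main "HOL-Library.Numeral_Type"
begin

(* Vertex v_{n,k} is the pair (n, k) with n :: int and k :: 10 (the ring Z/10Z). *)
type_synonym vtx = "int \<times> 10"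

definition gen_edge :: "vtx \<Rightarrow> vtx \<Rightarrow> bool" where
  "gen_edge a b \<longleftrightarrow>
     (fst b = fst a \<and> snd b = snd a + 1) \<or>
     (\<exists>k::10. fst b = fst a + 1 \<and> snd a = 2 * k + 1 \<and> snd b = 4 * k + 2)"

definition adj :: "vtx \<Rightarrow> vtx \<Rightarrow> bool" where
  "adj a b \<longleftrightarrow> gen_edge a b \<or> gen_edge b a"

definition graph_aut :: "(vtx \<Rightarrow> vtx) \<Rightarrow> bool" where
  "graph_aut \<phi> \<longleftrightarrow> bij \<phi> \<and> (\<forall>x y. adj (\<phi> x) (\<phi> y) \<longleftrightarrow> adj x y)"

definition level :: "int \<Rightarrow> vtx set" where
  "level n = {v. fst v = n}"

end

theory Submission
  imports Defs
begin

text \<open>Every vertex has two neighbours on its own level and one on an adjacent level, and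
counting 8-cycles tells them apart: the two level edges at a vertex lie on at least three
common 8-cycles, while the vertical edge lies on fewer than three 8-cycles together with
either level edge. Automorphisms preserve these counts, hence map level edges to level
edges; as each level is a 10-cycle of level edges, an automorphism maps each level into a
single level, and applying this to the inverse gives equality. Translations of the levels
and the reflection \<open>k \<mapsto> -k\<close> are automorphisms, so the counts only need to be checked at
the vertices \<open>(0, k)\<close> with \<open>0 \<le> k \<le> 5\<close>, which is done by enumerating paths.\<close>

lemma mem_Z10: "(k::10) \<in> {0,1,2,3,4,5,6,7,8,9}"
proof (induct k)
  case (of_int z)
  then have "0 \<le> z" "z < 10" by simp_all
  then have "z = 0 \<or> z = 1 \<or> z = 2 \<or> z = 3 \<or> z = 4 \<or> z = 5 \<or> z = 6 \<or> z = 7 \<or> z = 8 \<or> z = 9"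
    by presburger
  then show ?case by auto
qed

lemma ex_of_nat_Z10: "\<exists>i::nat. (k::10) = of_nat i"
proof (induct k)
  case (of_int z)
  then have "of_int z = (of_nat (nat z) :: 10)" by simp
  then show ?case by blast
qed

definition right :: "vtx \<Rightarrow> vtx" where
  "right v = (fst v, snd v + 1)"

definition left :: "vtx \<Rightarrow> vtx" where
  "left v = (fst v, snd v - 1)"

text \<open>On even residues, \<open>k \<mapsto> 3 * k + 5\<close> is the inverse of doubling on odd residues.\<close>
definition vertical :: "vtx \<Rightarrow> vtx" where
  "vertical v = (if snd v \<in> {1,3,5,7,9} then (fst v + 1, 2 * snd v) else (fst v - 1, 3 * snd v + 5))"

lemma upward_edge_iff:
  "(\<exists>k::10. a = 2 * k + 1 \<and> b = 4 * k + 2) \<longleftrightarrow> a \<in> {1,3,5,7,9} \<and> b = 2 * a"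
proof
  assume "\<exists>k::10. a = 2 * k + 1 \<and> b = 4 * k + 2"
  then obtain k where "a = 2 * k + 1" "b = 4 * k + 2" by blast
  then show "a \<in> {1,3,5,7,9} \<and> b = 2 * a"
    using mem_Z10[of k] by (elim insertE emptyE) simp_all
next
  assume "a \<in> {1,3,5,7,9} \<and> b = 2 * a"
  then show "\<exists>k::10. a = 2 * k + 1 \<and> b = 4 * k + 2"
    by (intro exI[of _ "3 * (a - 1)"]) (auto simp: algebra_simps)
qed

lemma downward_edge_iff:
  "(l \<in> {1,3,5,7,9} \<and> k = 2 * l) \<longleftrightarrow> k \<notin> {1,3,5,7,9} \<and> l = 3 * (k::10) + 5"
proof
  assume "l \<in> {1,3,5,7,9} \<and> k = 2 * l"
  then show "k \<notin> {1,3,5,7,9} \<and> l = 3 * k + 5" by (elim conjE insertE emptyE) simp_all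
next
  assume "k \<notin> {1,3,5,7,9} \<and> l = 3 * k + 5"
  then show "l \<in> {1,3,5,7,9} \<and> k = 2 * l" using mem_Z10[of k] by (elim conjE insertE emptyE) simp_all
qed

lemma gen_edge_iff:
  "gen_edge a b \<longleftrightarrow> (fst b = fst a \<and> snd b = snd a + 1)
     \<or> (fst b = fst a + 1 \<and> snd a \<in> {1,3,5,7,9} \<and> snd b = 2 * snd a)"
  unfolding gen_edge_def using upward_edge_iff[of "snd a" "snd b"] by blast

lemma gen_edge_from_iff:
  "gen_edge x y \<longleftrightarrow> y = right x \<or> (snd x \<in> {1,3,5,7,9} \<and> y = vertical x)"
  unfolding gen_edge_iff right_def vertical_def by (auto simp: prod_eq_iff)

lemma gen_edge_to_iff:
  "gen_edge y x \<longleftrightarrow> y = left x \<or> (snd x \<notin> {1,3,5,7,9} \<and> y = vertical x)"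
proof -
  have "(fst x = fst y \<and> snd x = snd y + 1) \<longleftrightarrow> y = left x"
    unfolding left_def prod_eq_iff by (auto simp: eq_diff_eq)
  moreover have "fst x = fst y + 1 \<longleftrightarrow> fst y = fst x - 1" by auto
  then have "(fst x = fst y + 1 \<and> snd y \<in> {1,3,5,7,9} \<and> snd x = 2 * snd y)
      \<longleftrightarrow> snd x \<notin> {1,3,5,7,9} \<and> y = vertical x"
    using downward_edge_iff[of "snd y" "snd x"] unfolding vertical_def prod_eq_iff by auto
  ultimately show ?thesis unfolding gen_edge_iff by blast
qed

lemma adj_iff: "adj x y \<longleftrightarrow> y \<in> {right x, left x, vertical x}"
  unfolding adj_def using gen_edge_from_iff[of x y] gen_edge_to_iff[of y x] by blast

lemma adj_sym: "adj x y \<longleftrightarrow> adj y x"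
  unfolding adj_def by blast

lemma neighbours_distinct:
  "right x \<noteq> left x" "vertical x \<noteq> right x" "vertical x \<noteq> left x"
  "right x \<noteq> x" "left x \<noteq> x" "vertical x \<noteq> x"
  using mem_Z10[of "snd x"] by (auto simp: right_def left_def vertical_def prod_eq_iff)

lemma graph_aut_adj: "graph_aut \<phi> \<Longrightarrow> adj (\<phi> x) (\<phi> y) \<longleftrightarrow> adj x y"
  unfolding graph_aut_def by blast

lemma graph_aut_inv: assumes "graph_aut \<phi>" shows "graph_aut (inv \<phi>)"
proof -
  have "bij \<phi>" using assms unfolding graph_aut_def by blast
  moreover have "adj (inv \<phi> x) (inv \<phi> y) \<longleftrightarrow> adj x y" for x y
    using graph_aut_adj[OF assms, of "inv \<phi> x" "inv \<phi> y"] \<open>bij \<phi>\<close> by (simp add: bij_is_surj surj_f_inv_f)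
  ultimately show ?thesis unfolding graph_aut_def by (simp add: bij_imp_bij_inv)
qed

lemma graph_autI:
  assumes "bij f" and "\<And>x. {right (f x), left (f x), vertical (f x)} = f ` {right x, left x, vertical x}"
  shows "graph_aut f"
proof -
  have "adj (f x) (f y) \<longleftrightarrow> adj x y" for x y
    unfolding adj_iff assms(2) using inj_image_mem_iff[OF bij_is_inj[OF assms(1)]] by blast
  with assms(1) show ?thesis unfolding graph_aut_def by blast
qed

definition shift :: "int \<Rightarrow> vtx \<Rightarrow> vtx" where
  "shift s v = (fst v + s, snd v)"

definition reflect :: "vtx \<Rightarrow> vtx" where
  "reflect v = (fst v, - snd v)"

lemma shift_neighbours:
  "right (shift s v) = shift s (right v)" "left (shift s v) = shift s (left v)"
  "vertical (shift s v) = shift s (vertical v)"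
  by (simp_all add: shift_def right_def left_def vertical_def)

lemma reflect_neighbours:
  "right (reflect v) = reflect (left v)" "left (reflect v) = reflect (right v)"
  "vertical (reflect v) = reflect (vertical v)"
proof -
  show "right (reflect v) = reflect (left v)" "left (reflect v) = reflect (right v)"
    by (simp_all add: reflect_def right_def left_def)
  show "vertical (reflect v) = reflect (vertical v)"
    using mem_Z10[of "snd v"] by (elim insertE emptyE) (simp_all add: reflect_def vertical_def)
qed

lemma graph_aut_shift: "graph_aut (shift s)"
proof (rule graph_autI)
  show "bij (shift s)" by (rule o_bij[of "shift (- s)"]) (auto simp: shift_def)
qed (simp add: shift_neighbours)

lemma graph_aut_reflect: "graph_aut reflect"
proof (rule graph_autI)
  show "bij reflect" by (rule o_bij[of reflect]) (auto simp: reflect_def)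
qed (auto simp: reflect_neighbours)

fun walk :: "vtx list \<Rightarrow> bool" where
  "walk [] = True"
| "walk [x] = True"
| "walk (x # y # r) \<longleftrightarrow> adj x y \<and> walk (y # r)"

lemma walk_map: "graph_aut \<phi> \<Longrightarrow> walk (map \<phi> p) = walk p"
  by (induction p rule: walk.induct) (auto simp: graph_aut_adj)

lemma walk_snoc: "walk (xs @ [y, z]) \<longleftrightarrow> walk (xs @ [y]) \<and> adj y z"
  by (induction xs rule: walk.induct) auto

lemma walk_rev: "walk (rev p) = walk p"
proof (induction p rule: walk.induct)
  case (3 x y r)
  then show ?case using walk_snoc[of "rev r" y x] adj_sym[of x y] by auto
qed auto

text \<open>For neighbours \<open>a\<close>, \<open>b\<close> of \<open>v\<close>, these paths are the 8-cycles through the path \<open>a v b\<close>.\<close>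
definition detours :: "vtx \<Rightarrow> vtx \<Rightarrow> vtx \<Rightarrow> vtx list set" where
  "detours v a b = {p. length p = 7 \<and> hd p = a \<and> last p = b \<and> walk p \<and> distinct (v # p)}"

lemma card_detours_commute: "card (detours v a b) = card (detours v b a)"
proof -
  have "rev ` detours v a b = detours v b a"
  proof (intro set_eqI iffI)
    fix q assume "q \<in> detours v b a"
    then have "rev q \<in> detours v a b" unfolding detours_def by (auto simp: walk_rev hd_rev last_rev)
    then show "q \<in> rev ` detours v a b" by (metis image_eqI rev_rev_ident)
  qed (auto simp: detours_def walk_rev hd_rev last_rev)
  then show ?thesis by (metis card_image inj_on_def rev_rev_ident)
qed

lemma detours_map_subset:
  assumes "graph_aut \<phi>"
  shows "map \<phi> ` detours v a b \<subseteq> detours (\<phi> v) (\<phi> a) (\<phi> b)"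
proof
  fix q assume "q \<in> map \<phi> ` detours v a b"
  then obtain p where p: "p \<in> detours v a b" and q: "q = map \<phi> p" by blast
  have "inj \<phi>" using assms unfolding graph_aut_def by (simp add: bij_is_inj)
  then have "distinct (map \<phi> (v # p))" using p
    by (auto simp: detours_def distinct_map inj_image_mem_iff intro: inj_on_subset)
  moreover have "p \<noteq> []" using p by (auto simp: detours_def)
  ultimately show "q \<in> detours (\<phi> v) (\<phi> a) (\<phi> b)"
    using p walk_map[OF assms, of p] by (auto simp: q detours_def hd_map last_map)
qed

lemma card_detours_aut:
  assumes "graph_aut \<phi>"
  shows "card (detours (\<phi> v) (\<phi> a) (\<phi> b)) = card (detours v a b)"
proof -
  have "bij \<phi>" using assms unfolding graph_aut_def by blast
  then have inv: "inv \<phi> (\<phi> x) = x" "\<phi> (inv \<phi> x) = x" for x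
    by (simp_all add: bij_is_inj bij_is_surj surj_f_inv_f)
  have "detours (\<phi> v) (\<phi> a) (\<phi> b) = map \<phi> ` map (inv \<phi>) ` detours (\<phi> v) (\<phi> a) (\<phi> b)"
    by (simp add: image_image inv map_idI)
  also have "\<dots> \<subseteq> map \<phi> ` detours v a b"
    using detours_map_subset[OF graph_aut_inv[OF assms], of "\<phi> v" "\<phi> a" "\<phi> b"] by (auto simp: inv)
  finally have "map \<phi> ` detours v a b = detours (\<phi> v) (\<phi> a) (\<phi> b)"
    using detours_map_subset[OF assms] by blast
  moreover have "inj_on (map \<phi>) (detours v a b)"
    using inj_mapI[OF bij_is_inj[OF \<open>bij \<phi>\<close>]] by (rule inj_on_subset) simp
  ultimately show ?thesis by (metis card_image)
qed

fun simple_paths :: "nat \<Rightarrow> vtx \<Rightarrow> vtx list \<Rightarrow> vtx list list" where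
  "simple_paths 0 a F = [[a]]"
| "simple_paths (Suc m) a F =
     concat (map (\<lambda>y. if y \<in> set F then [] else map ((#) a) (simple_paths m y (a # F)))
       [right a, left a, vertical a])"

lemma set_simple_paths_Suc:
  "set (simple_paths (Suc m) a F) =
     (\<Union>y \<in> {right a, left a, vertical a} - set F. (#) a ` set (simple_paths m y (a # F)))"
  by (simp del: simple_paths.simps add: simple_paths.simps(2)) blast

lemma set_simple_paths:
  "a \<notin> set F \<Longrightarrow> set (simple_paths m a F) =
     {p. length p = Suc m \<and> hd p = a \<and> walk p \<and> distinct p \<and> set p \<inter> set F = {}}"
proof (induction m arbitrary: a F)
  case 0
  then show ?case by (auto simp: length_Suc_conv)
next
  case (Suc m)
  show ?case
  proof (intro set_eqI iffI)
    fix p assume "p \<in> set (simple_paths (Suc m) a F)"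
    then obtain y q where y: "y \<in> {right a, left a, vertical a}" "y \<notin> set F"
      and q: "q \<in> set (simple_paths m y (a # F))" and p: "p = a # q"
      unfolding set_simple_paths_Suc by blast
    have "y \<noteq> a" using y(1) neighbours_distinct(4-6)[of a] by (metis insert_iff empty_iff)
    with q y Suc.IH[of y "a # F"] obtain r where "q = y # r" "length r = m" "walk q" "distinct q"
      "set q \<inter> set (a # F) = {}"
      by (auto simp: length_Suc_conv)
    then show "p \<in> {p. length p = Suc (Suc m) \<and> hd p = a \<and> walk p \<and> distinct p \<and> set p \<inter> set F = {}}"
      using p y Suc.prems by (auto simp: adj_iff)
  next
    fix p assume "p \<in> {p. length p = Suc (Suc m) \<and> hd p = a \<and> walk p \<and> distinct p \<and> set p \<inter> set F = {}}"
    then obtain y r where p: "p = a # y # r" and "length r = m" "adj a y" "walk (y # r)"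
      "distinct (a # y # r)" "set (a # y # r) \<inter> set F = {}"
      by (auto simp: length_Suc_conv)
    moreover from this have "y # r \<in> set (simple_paths m y (a # F))" using Suc.IH[of y "a # F"] by auto
    ultimately show "p \<in> set (simple_paths (Suc m) a F)" by (auto simp: adj_iff)
  qed
qed

lemma card_detours_eq:
  assumes "a \<noteq> v"
  shows "card (detours v a b) = length (remdups (filter (\<lambda>p. last p = b) (simple_paths 6 a [v])))"
proof -
  have "set (simple_paths 6 a [v]) =
      {p. length p = 7 \<and> hd p = a \<and> walk p \<and> distinct p \<and> set p \<inter> {v} = {}}"
    using set_simple_paths[of a "[v]" 6] assms by (simp del: simple_paths.simps)
  then have "set (filter (\<lambda>p. last p = b) (simple_paths 6 a [v])) = detours v a b"
    by (auto simp: detours_def)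
  then show ?thesis by (metis length_remdups_card_conv)
qed

definition detour_profile :: "vtx \<Rightarrow> bool" where
  "detour_profile x \<longleftrightarrow> 3 \<le> card (detours x (left x) (right x))
     \<and> card (detours x (vertical x) (left x)) < 3 \<and> card (detours x (vertical x) (right x)) < 3"

lemma detour_profile_level_0: "k \<in> {0,1,2,3,4,5} \<Longrightarrow> detour_profile (0, k)"
  unfolding detour_profile_def
  by (elim insertE emptyE; simp add: card_detours_eq neighbours_distinct)
     (simp_all add: right_def left_def vertical_def numeral_eq_Suc)

lemma detour_profile_shift: "detour_profile (shift s x) \<longleftrightarrow> detour_profile x"
  unfolding detour_profile_def shift_neighbours card_detours_aut[OF graph_aut_shift] ..

lemma detour_profile_reflect: "detour_profile (reflect x) \<longleftrightarrow> detour_profile x"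
  unfolding detour_profile_def reflect_neighbours card_detours_aut[OF graph_aut_reflect]
  using card_detours_commute[of x "left x" "right x"] by auto

lemma detour_profile: "detour_profile x"
proof -
  obtain n k where x: "x = shift n (0, k)" by (simp add: shift_def prod_eq_iff)
  consider "k \<in> {0,1,2,3,4,5}" | "- k \<in> {1,2,3,4}"
    using mem_Z10[of k] by (elim insertE emptyE) simp_all
  then have "detour_profile (0, k)"
  proof cases
    case 2
    then have "detour_profile (0, - k)" by (intro detour_profile_level_0) auto
    then show ?thesis using detour_profile_reflect[of "(0, - k)"] by (simp add: reflect_def)
  qed (rule detour_profile_level_0)
  then show ?thesis by (simp add: x detour_profile_shift)
qed

lemma same_level_iff_many_detours:
  assumes "adj x y"
  shows "fst y = fst x \<longleftrightarrow> (\<exists>z. adj x z \<and> z \<noteq> y \<and> 3 \<le> card (detours x y z))"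
proof -
  have profile: "3 \<le> card (detours x (left x) (right x))" "3 \<le> card (detours x (right x) (left x))"
    "card (detours x (vertical x) (left x)) < 3" "card (detours x (vertical x) (right x)) < 3"
    using detour_profile[of x] card_detours_commute[of x "left x" "right x"]
    unfolding detour_profile_def by simp_all
  have levels: "fst (right x) = fst x" "fst (left x) = fst x" "fst (vertical x) \<noteq> fst x"
    by (simp_all add: right_def left_def vertical_def)
  consider "y = right x" | "y = left x" | "y = vertical x" using assms adj_iff by blast
  then show ?thesis
  proof cases
    case 1
    then have "adj x (left x) \<and> left x \<noteq> y \<and> 3 \<le> card (detours x y (left x))"
      using profile neighbours_distinct(1)[of x] by (auto simp: adj_iff)
    with 1 levels show ?thesis by blast
  next
    case 2
    then have "adj x (right x) \<and> right x \<noteq> y \<and> 3 \<le> card (detours x y (right x))"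
      using profile neighbours_distinct(1)[of x] by (auto simp: adj_iff)
    with 2 levels show ?thesis by blast
  next
    case 3
    have "\<not> 3 \<le> card (detours x y z)" if "adj x z" "z \<noteq> y" for z
      using that 3 profile(3,4) by (auto simp: adj_iff)
    with 3 levels show ?thesis by blast
  qed
qed

lemma graph_aut_same_level_adj:
  assumes "graph_aut \<phi>" and "adj x y" and "fst y = fst x"
  shows "fst (\<phi> y) = fst (\<phi> x)"
proof -
  obtain z where "adj x z" "z \<noteq> y" "3 \<le> card (detours x y z)"
    using assms(2,3) same_level_iff_many_detours by blast
  moreover have "\<phi> z \<noteq> \<phi> y" using assms(1) \<open>z \<noteq> y\<close> by (auto simp: graph_aut_def bij_is_inj inj_eq)
  ultimately have "\<exists>z'. adj (\<phi> x) z' \<and> z' \<noteq> \<phi> y \<and> 3 \<le> card (detours (\<phi> x) (\<phi> y) z')"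
    using graph_aut_adj[OF assms(1)] card_detours_aut[OF assms(1)] by metis
  then show ?thesis
    using same_level_iff_many_detours graph_aut_adj[OF assms(1)] assms(2) by blast
qed

lemma graph_aut_same_level:
  assumes "graph_aut \<phi>" and "fst x = fst y"
  shows "fst (\<phi> x) = fst (\<phi> y)"
proof -
  have step: "fst (\<phi> (right v)) = fst (\<phi> v)" for v
    using graph_aut_same_level_adj[OF assms(1), of v "right v"] by (simp add: adj_iff right_def)
  have "fst (\<phi> x) = fst (\<phi> (fst x, snd x + of_nat i))" for i
  proof (induction i)
    case (Suc i)
    then show ?case using step[of "(fst x, snd x + of_nat i)"] by (simp add: right_def ac_simps)
  qed simp
  moreover obtain i :: nat where "snd y = snd x + of_nat i"
    using ex_of_nat_Z10[of "snd y - snd x"] by (auto simp: algebra_simps)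
  ultimately show ?thesis using assms(2) by (metis prod.collapse)
qed

lemma graph_aut_image_level:
  assumes "graph_aut \<phi>"
  shows "\<phi> ` level n = level (fst (\<phi> (n, 0)))"
proof (intro set_eqI iffI)
  fix y assume "y \<in> \<phi> ` level n"
  then obtain x where "fst x = n" and "y = \<phi> x" by (auto simp: level_def)
  then show "y \<in> level (fst (\<phi> (n, 0)))"
    using graph_aut_same_level[OF assms, of x "(n, 0)"] by (simp add: level_def)
next
  fix y assume "y \<in> level (fst (\<phi> (n, 0)))"
  have "bij \<phi>" using assms by (simp add: graph_aut_def)
  then have inv: "inv \<phi> (\<phi> v) = v" "\<phi> (inv \<phi> v) = v" for v
    by (simp_all add: bij_is_inj bij_is_surj surj_f_inv_f)
  have "fst (inv \<phi> y) = fst (inv \<phi> (\<phi> (n, 0)))"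
    using graph_aut_same_level[OF graph_aut_inv[OF assms], of y "\<phi> (n, 0)"] \<open>y \<in> level _\<close>
    by (simp add: level_def)
  then have "inv \<phi> y \<in> level n" by (simp add: inv level_def)
  then show "y \<in> \<phi> ` level n" by (rule image_eqI[where f = \<phi>, OF inv(2)[of y, symmetric]])
qed

theorem mainTheorem4:
  assumes "graph_aut \<phi>"
  shows "\<forall>n. \<exists>m. \<phi> ` level n = level m"
  using graph_aut_image_level[OF assms] by blast

end
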